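(* Let $T$ be a valid set such that there is a unique pair $(\alpha',\beta')\in T$ with $\gamma_{\alpha',\beta'}=\Gamma_T$. Then $n^{-1}|\mathcal{E}_T(\{(\alpha',\beta')\})\cap[n]|\to1$ as $n\to\infty$; that is, almost every $n$ has $\mathcal{S}_T(n)=\{(\alpha',\beta')\}$.
   Context: For relatively prime positive integers $\alpha,\beta$ and positive integers $a_1,a_2$, the $(\alpha,\beta)$-walk $w^{\alpha,\beta}_k(a_1,a_2)$ is given by $w_1=a_1$, $w_2=a_2$, $w_{k+2}=\alpha w_{k+1}+\beta w_k$ ($k\ge1$). For a positive integer $n$, $s^{\alpha,\beta}(n;a_1,a_2)$ is the (largest) index $s$ with $w^{\alpha,\beta}_s(a_1,a_2)=n$ ($-\infty$ if none), and $s^{\alpha,\beta}(n)=\max_{a_1,a_2\ge1}s^{\alpha,\beta}(n;a_1,a_2)$. $\gamma_{\alpha,\beta}=\frac12(\alpha+\sqrt{\alpha^2+4\beta})$. A set $T$ is valid if $T\subseteq\{(\alpha,\beta):\alpha,\beta\ge1,\gcd(\alpha,\beta)=1\}$. For valid $T$: $\bar s_T(n)=\max_{(\alpha,\beta)\in T}s^{\alpha,\beta}(n)$, $\mathcal{S}_T(n)=\{(\alpha,\beta)\in T:s^{\alpha,\beta}(n)=\bar s_T(n)\}$, $\Gamma_T=\min\{\gamma_{\alpha,\beta}:(\alpha,\beta)\in T\}$, and for a set $S$ of pairs $\mathcal{E}_T(S)=\{n\ge1:S=\mathcal{S}_T(n)\}$. $[n]=\{1,\dots,n\}$. *)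

theory Defs
  imports "HOL-Analysis.Analysis"
begin

fun wseq :: "nat \<Rightarrow> nat \<Rightarrow> nat \<Rightarrow> nat \<Rightarrow> nat \<Rightarrow> nat" where
  "wseq \<alpha> \<beta> a1 a2 0 = a1"
| "wseq \<alpha> \<beta> a1 a2 (Suc 0) = a2"
| "wseq \<alpha> \<beta> a1 a2 (Suc (Suc k)) = \<alpha> * wseq \<alpha> \<beta> a1 a2 (Suc k) + \<beta> * wseq \<alpha> \<beta> a1 a2 k"

text \<open>The (alpha,beta)-walk, indexed from 1: walk alpha beta a1 a2 k = w_k.\<close>
definition walk :: "nat \<Rightarrow> nat \<Rightarrow> nat \<Rightarrow> nat \<Rightarrow> nat \<Rightarrow> nat" where
  "walk \<alpha> \<beta> a1 a2 k = wseq \<alpha> \<beta> a1 a2 (k - 1)"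

text \<open>s^{alpha,beta}(n;a1,a2): largest index s \<ge> 1 with w_s = n; None stands for -infinity.\<close>
definition s_walk :: "nat \<Rightarrow> nat \<Rightarrow> nat \<Rightarrow> nat \<Rightarrow> nat \<Rightarrow> nat option" where
  "s_walk \<alpha> \<beta> n a1 a2 =
     (if \<exists>s\<ge>1. walk \<alpha> \<beta> a1 a2 s = n
      then Some (Max {s. s \<ge> 1 \<and> walk \<alpha> \<beta> a1 a2 s = n}) else None)"

text \<open>s^{alpha,beta}(n) = max over a1,a2 \<ge> 1 (for n \<ge> 1 this set is nonempty: a2 = n gives index 2).\<close>
definition s_max :: "nat \<Rightarrow> nat \<Rightarrow> nat \<Rightarrow> nat" where
  "s_max \<alpha> \<beta> n = Max {s. \<exists>a1 a2. a1 \<ge> 1 \<and> a2 \<ge> 1 \<and> s_walk \<alpha> \<beta> n a1 a2 = Some s}"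

definition gamma :: "nat \<Rightarrow> nat \<Rightarrow> real" where
  "gamma \<alpha> \<beta> = (real \<alpha> + sqrt (real \<alpha> ^ 2 + 4 * real \<beta>)) / 2"

definition valid :: "(nat \<times> nat) set \<Rightarrow> bool" where
  "valid T \<longleftrightarrow> (\<forall>(\<alpha>, \<beta>) \<in> T. \<alpha> \<ge> 1 \<and> \<beta> \<ge> 1 \<and> coprime \<alpha> \<beta>)"

definition sbar :: "(nat \<times> nat) set \<Rightarrow> nat \<Rightarrow> nat" where
  "sbar T n = Max ((\<lambda>(\<alpha>, \<beta>). s_max \<alpha> \<beta> n) ` T)"

definition Sset :: "(nat \<times> nat) set \<Rightarrow> nat \<Rightarrow> (nat \<times> nat) set" where
  "Sset T n = {(\<alpha>, \<beta>) \<in> T. s_max \<alpha> \<beta> n = sbar T n}"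

definition Gamma :: "(nat \<times> nat) set \<Rightarrow> real" where
  "Gamma T = Inf ((\<lambda>(\<alpha>, \<beta>). gamma \<alpha> \<beta>) ` T)"

definition Eset :: "(nat \<times> nat) set \<Rightarrow> (nat \<times> nat) set \<Rightarrow> nat set" where
  "Eset T S = {n. n \<ge> 1 \<and> S = Sset T n}"

end

theory Submission
  imports Defs
begin

text \<open>Let U be the Lucas sequence of (a, b): U 0 = 0, U 1 = 1, U (k+2) = a U (k+1) + b U k.
  Every walk satisfies w (k+2) = b U k w 1 + U (k+1) w 2, and a walk can be restarted at any
  later position, so s(n) \<ge> k + 2 for the pair (a, b) exactly when n = A x + B y with x, y \<ge> 1,
  where A = b U k and B = U (k+1) are coprime and A B is about b \<gamma>^(2k+1). Hence every
  n > b \<gamma>^(2k+1) has s(n) \<ge> k + 2 (Sylvester--Frobenius), while at most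
  N^2 / (A B) = O(N^2 \<gamma>^(-2k)) numbers n \<le> N do.

  Given \<epsilon> > 0 and N, choose k with \<beta>' \<gamma>'^(2k+1) \<le> \<epsilon> N < \<beta>' \<gamma>'^(2k+3). Every larger n \<le> N
  reaches index k + 2 for (\<alpha>', \<beta>'), so it can only fail to lie in E_T({(\<alpha>', \<beta>')}) if a rival
  pair reaches k + 2 as well. Rivals with \<gamma> \<ge> \<gamma>'^3 cannot do so below N, and each of the
  finitely many rivals with \<gamma>' < \<gamma> < \<gamma>'^3 does so for only O(N (\<gamma>'/\<gamma>)^(2k)) = o(N)
  numbers n \<le> N.\<close>

lemma ex_pos_combination_if_coprime:
  fixes A B n :: nat
  assumes "coprime A B" "1 \<le> A" "1 \<le> B" "A * B < n"
  shows "\<exists>x y. 1 \<le> x \<and> 1 \<le> y \<and> n = A * x + B * y"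
proof -
  obtain s t where "B * s = A * t + 1"
    using bezout_nat[of B A] assms(1,3) by (auto simp: coprime_iff_gcd_eq_1 gcd.commute)
  then have st: "B * (s * n) = A * (t * n) + n"
    by (metis add_mult_distrib mult.assoc mult_1)
  \<comment> \<open>\<open>s\<close> inverts \<open>B\<close> modulo \<open>A\<close>; take \<open>y \<equiv> s n (mod A)\<close> in \<open>[1, A]\<close>, then \<open>B y < n\<close>.\<close>
  define y where "y = (if (s * n) mod A = 0 then A else (s * n) mod A)"
  have y: "1 \<le> y" "y \<le> A"
    using assms(2) by (auto simp: y_def)
  have "y mod A = (s * n) mod A"
    by (auto simp: y_def)
  then have "(B * y) mod A = (B * (s * n)) mod A"
    by (metis mod_mult_right_eq)
  also have "\<dots> = n mod A"
    using st by simp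
  finally have "n mod A = (B * y) mod A" ..
  moreover have "B * y \<le> A * B"
    using y(2) by (metis mult.commute mult_le_mono2)
  then have By: "B * y < n"
    using assms(4) by linarith
  ultimately have "A dvd n - B * y"
    by (simp add: mod_eq_dvd_iff_nat)
  then obtain x where x: "n - B * y = A * x" ..
  then have "1 \<le> x" using By by (cases x) auto
  moreover have "n = A * x + B * y" using x By by simp
  ultimately show ?thesis using y(1) by blast
qed

lemma card_pos_combinations_le:
  fixes A B N :: nat
  shows "card {n \<in> {1..N}. \<exists>x y. 1 \<le> x \<and> 1 \<le> y \<and> n = A * x + B * y} * (A * B) \<le> N ^ 2"
proof (cases "A = 0 \<or> B = 0")
  case False
  let ?S = "{n \<in> {1..N}. \<exists>x y. 1 \<le> x \<and> 1 \<le> y \<and> n = A * x + B * y}"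
  have "?S \<subseteq> (\<lambda>(x, y). A * x + B * y) ` ({1..N div A} \<times> {1..N div B})"
  proof
    fix n assume "n \<in> ?S"
    then obtain x y where xy: "1 \<le> x" "1 \<le> y" "n = A * x + B * y" "n \<le> N"
      by auto
    then have "x \<le> N div A" "y \<le> N div B"
      using False by (simp_all add: less_eq_div_iff_mult_less_eq mult.commute)
    then show "n \<in> (\<lambda>(x, y). A * x + B * y) ` ({1..N div A} \<times> {1..N div B})"
      using xy by force
  qed
  then have "card ?S \<le> card ((\<lambda>(x, y). A * x + B * y) ` ({1..N div A} \<times> {1..N div B}))"
    by (rule card_mono[rotated]) simp
  also have "\<dots> \<le> card ({1..N div A} \<times> {1..N div B})"
    by (rule card_image_le) simp
  finally have "card ?S * (A * B) \<le> (N div A * (N div B)) * (A * B)"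
    by simp
  also have "\<dots> = (N div A * A) * (N div B * B)"
    by (simp add: algebra_simps)
  also have "\<dots> \<le> N * N"
    by (intro mult_le_mono) simp_all
  finally show ?thesis
    by (simp add: power2_eq_square)
qed auto

lemma card_below_real_le:
  assumes "0 \<le> x"
  shows "real (card {n \<in> {1..N}. real n \<le> x}) \<le> x"
proof -
  have "card {n \<in> {1..N}. real n \<le> x} \<le> card {1..nat \<lfloor>x\<rfloor>}"
    using assms by (intro card_mono) (auto simp: le_nat_iff le_floor_iff)
  then have "real (card {n \<in> {1..N}. real n \<le> x}) \<le> real (nat \<lfloor>x\<rfloor>)"
    by simp
  also have "\<dots> \<le> x"
    using assms by linarith
  finally show ?thesis .
qed

lemma eventually_le_pow:
  fixes g M :: real
  assumes "1 < g"
  shows "\<forall>\<^sub>F k in sequentially. M \<le> g ^ k"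
proof -
  obtain k0 where "M < g ^ k0" using real_arch_pow[OF assms] by blast
  moreover have "g ^ k0 \<le> g ^ k" if "k0 \<le> k" for k
    using assms that by (intro power_increasing) auto
  ultimately show ?thesis
    unfolding eventually_sequentially by force
qed

lemma eventually_pow_bracket:
  fixes b c :: real
  assumes "1 < b" "0 < c" "\<forall>\<^sub>F k in sequentially. P k"
  shows "\<forall>\<^sub>F N in sequentially. \<exists>k. P k \<and> c * b ^ k \<le> real N \<and> real N < c * b ^ Suc k"
proof -
  obtain K where K: "\<And>k. K \<le> k \<Longrightarrow> P k"
    using assms(3) unfolding eventually_sequentially by blast
  have "\<forall>\<^sub>F N in sequentially. c * b ^ K \<le> real N"
    using eventually_ge_at_top[of "nat \<lceil>c * b ^ K\<rceil>"] by eventually_elim linarith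
  then show ?thesis
  proof eventually_elim
    fix N assume N: "c * b ^ K \<le> real N"
    define x where "x = real N / c"
    have bKx: "b ^ K \<le> x" using N assms(2) by (simp add: x_def pos_le_divide_eq mult.commute)
    moreover have "1 \<le> b ^ K" using assms(1) by simp
    ultimately have x1: "1 \<le> x" by linarith
    define k where "k = nat \<lfloor>log b x\<rfloor>"
    have "\<lfloor>log b x\<rfloor> = int k"
      using x1 assms(1) by (simp add: k_def)
    then have "b powr real k \<le> x \<and> x < b powr (real k + 1)"
      using x1 assms(1) floor_log_eq_powr_iff[of x b "int k"] by simp
    moreover have "b powr (real k + 1) = b ^ Suc k"
      using powr_realpow[of b "Suc k"] assms(1) by (simp add: add.commute)
    ultimately have k: "b ^ k \<le> x" "x < b ^ Suc k"
      using assms(1) by (simp_all add: powr_realpow)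
    then have "K \<le> k"
      using bKx assms(1) power_less_imp_less_exp[of b K "Suc k"] by linarith
    moreover have "c * b ^ k \<le> real N" "real N < c * b ^ Suc k"
      using k assms(2) by (simp_all add: x_def pos_le_divide_eq pos_divide_less_eq mult.commute)
    ultimately show "\<exists>k. P k \<and> c * b ^ k \<le> real N \<and> real N < c * b ^ Suc k"
      using K by blast
  qed
qed

definition lucas_u :: "nat \<Rightarrow> nat \<Rightarrow> nat \<Rightarrow> nat" where
  "lucas_u a b k = wseq a b 0 1 k"

lemma lucas_u_simps [simp]:
  "lucas_u a b 0 = 0"
  "lucas_u a b (Suc 0) = 1"
  "lucas_u a b (Suc (Suc k)) = a * lucas_u a b (Suc k) + b * lucas_u a b k"
  by (simp_all add: lucas_u_def)

lemma wseq_Suc_eq_lucas_u: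
  "wseq a b x y (Suc k) = b * lucas_u a b k * x + lucas_u a b (Suc k) * y"
proof (induction k rule: induct_nat_012)
  case (ge2 k)
  have "wseq a b x y (Suc (Suc (Suc k))) = a * wseq a b x y (Suc (Suc k)) + b * wseq a b x y (Suc k)"
    by simp
  also have "\<dots> = b * lucas_u a b (Suc (Suc k)) * x + lucas_u a b (Suc (Suc (Suc k))) * y"
    by (simp only: ge2) (simp add: algebra_simps)
  finally show ?case .
qed simp_all

lemma wseq_add:
  "wseq a b x y (j + m) = wseq a b (wseq a b x y j) (wseq a b x y (Suc j)) m"
  by (induction m rule: induct_nat_012) simp_all

lemma wseq_pos:
  assumes "1 \<le> a" "1 \<le> b" "1 \<le> x" "1 \<le> y"
  shows "1 \<le> wseq a b x y k"
  using assms by (induction k rule: induct_nat_012) (auto simp: trans_le_add1)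

lemma wseq_ge_index:
  assumes "1 \<le> a" "1 \<le> b" "1 \<le> x" "1 \<le> y"
  shows "k \<le> wseq a b x y k"
proof (induction k rule: induct_nat_012)
  case (ge2 k)
  have "Suc k \<le> a * wseq a b x y (Suc k)"
    using ge2(2) assms(1) by (metis le_trans mult_1 mult_le_mono1)
  moreover have "1 \<le> b * wseq a b x y k"
    using assms wseq_pos[OF assms] by simp
  moreover have "wseq a b x y (Suc (Suc k)) = a * wseq a b x y (Suc k) + b * wseq a b x y k"
    by simp
  ultimately show ?case by linarith
qed (use assms in simp_all)

lemma lucas_u_Suc_pos:
  assumes "1 \<le> a"
  shows "1 \<le> lucas_u a b (Suc k)"
  using assms by (induction k rule: induct_nat_012) (auto simp: trans_le_add1)

lemma coprime_lucas_u:
  assumes "coprime a b"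
  shows "coprime (b * lucas_u a b k) (lucas_u a b (Suc k))"
proof -
  have "coprime (lucas_u a b k) (lucas_u a b (Suc k)) \<and> coprime b (lucas_u a b (Suc k))"
  proof (induction k)
    case (Suc k)
    then have "coprime (lucas_u a b (Suc k)) (b * lucas_u a b k)"
      by (simp add: coprime_commute)
    then have "coprime (lucas_u a b (Suc k)) (a * lucas_u a b (Suc k) + b * lucas_u a b k)"
      by (simp add: coprime_iff_gcd_eq_1 gcd_add_mult)
    moreover have "coprime b (a * lucas_u a b (Suc k) + b * lucas_u a b k)"
    proof -
      have "coprime b (a * lucas_u a b (Suc k))"
        using Suc assms by (simp add: coprime_commute)
      then show ?thesis
        by (metis coprime_iff_gcd_eq_1 gcd_add_mult add.commute mult.commute)
    qed
    ultimately show ?case by simp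
  qed simp
  then show ?thesis by simp
qed

lemma walk_index_le:
  assumes "1 \<le> a" "1 \<le> b" "1 \<le> x" "1 \<le> y" "walk a b x y s = n"
  shows "s \<le> n + 1"
  using wseq_ge_index[OF assms(1-4), of "s - 1"] assms(5) by (simp add: walk_def)

lemma finite_walk_indices:
  assumes "1 \<le> a" "1 \<le> b" "1 \<le> x" "1 \<le> y"
  shows "finite {s. 1 \<le> s \<and> walk a b x y s = n}"
proof (rule finite_subset)
  show "{s. 1 \<le> s \<and> walk a b x y s = n} \<subseteq> {..n + 1}"
    using walk_index_le[OF assms] by blast
qed simp

lemma s_walk_SomeD:
  assumes "1 \<le> a" "1 \<le> b" "1 \<le> x" "1 \<le> y" "s_walk a b n x y = Some t"
  shows "1 \<le> t" "walk a b x y t = n"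
proof -
  have "{s. 1 \<le> s \<and> walk a b x y s = n} \<noteq> {}"
    and "t = Max {s. 1 \<le> s \<and> walk a b x y s = n}"
    using assms(5) by (auto simp: s_walk_def split: if_splits)
  then have "t \<in> {s. 1 \<le> s \<and> walk a b x y s = n}"
    using Max_in[OF finite_walk_indices[OF assms(1-4)]] by simp
  then show "1 \<le> t" "walk a b x y t = n" by simp_all
qed

lemma s_walk_ge:
  assumes "1 \<le> a" "1 \<le> b" "1 \<le> x" "1 \<le> y" "1 \<le> s" "walk a b x y s = n"
  shows "\<exists>t. s_walk a b n x y = Some t \<and> s \<le> t"
  using assms Max_ge[OF finite_walk_indices[OF assms(1-4)], of s] by (auto simp: s_walk_def)

lemma le_s_max_iff:
  assumes "1 \<le> a" "1 \<le> b" "1 \<le> n"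
  shows "m \<le> s_max a b n \<longleftrightarrow>
    (\<exists>s x y. m \<le> s \<and> 1 \<le> s \<and> 1 \<le> x \<and> 1 \<le> y \<and> walk a b x y s = n)"
    (is "_ \<longleftrightarrow> ?reach")
proof -
  define S where "S = {s. \<exists>x y. 1 \<le> x \<and> 1 \<le> y \<and> s_walk a b n x y = Some s}"
  have reach_iff: "?reach \<longleftrightarrow> (\<exists>t\<in>S. m \<le> t)"
  proof
    assume ?reach
    then obtain s x y where "m \<le> s" "1 \<le> s" "1 \<le> x" "1 \<le> y" "walk a b x y s = n"
      by blast
    moreover obtain t where "s_walk a b n x y = Some t" "s \<le> t"
      using s_walk_ge[OF assms(1,2) calculation(3,4,2,5)] by blast
    ultimately show "\<exists>t\<in>S. m \<le> t"
      unfolding S_def by (intro bexI[of _ t]) auto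
  next
    assume "\<exists>t\<in>S. m \<le> t"
    then obtain t x y where t: "m \<le> t" "1 \<le> x" "1 \<le> y" "s_walk a b n x y = Some t"
      unfolding S_def by blast
    then show ?reach
      using s_walk_SomeD[OF assms(1,2) t(2-4)] by blast
  qed
  have "S \<subseteq> {..n + 1}"
  proof
    fix t assume "t \<in> S"
    then obtain x y where "1 \<le> x" "1 \<le> y" "s_walk a b n x y = Some t"
      unfolding S_def by blast
    then show "t \<in> {..n + 1}"
      using s_walk_SomeD[OF assms(1,2)] walk_index_le[OF assms(1,2)] by blast
  qed
  then have "finite S" by (rule finite_subset) simp
  moreover have "walk a b 1 n 2 = n" by (simp add: walk_def)
  then have "S \<noteq> {}"
    using s_walk_ge[OF assms(1,2) _ assms(3), of 1 2] assms(3) unfolding S_def by force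
  moreover have "s_max a b n = Max S" by (simp add: s_max_def S_def)
  ultimately show ?thesis
    using reach_iff by (simp add: Max_ge_iff)
qed

lemma le_s_max_iff_lucas_u:
  assumes "1 \<le> a" "1 \<le> b" "1 \<le> n"
  shows "k + 2 \<le> s_max a b n \<longleftrightarrow>
    (\<exists>x y. 1 \<le> x \<and> 1 \<le> y \<and> n = b * lucas_u a b k * x + lucas_u a b (Suc k) * y)"
proof
  assume "k + 2 \<le> s_max a b n"
  then obtain s x y where s: "k + 2 \<le> s" "1 \<le> x" "1 \<le> y" "walk a b x y s = n"
    unfolding le_s_max_iff[OF assms] by blast
  define x' where "x' = wseq a b x y (s - k - 2)"
  define y' where "y' = wseq a b x y (Suc (s - k - 2))"
  have "s - 1 = (s - k - 2) + Suc k" using s(1) by simp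
  then have "wseq a b x' y' (Suc k) = n"
    using s(4) wseq_add[of a b x y "s - k - 2" "Suc k"] by (simp only: walk_def x'_def y'_def)
  moreover have "1 \<le> x'" "1 \<le> y'"
    using wseq_pos[OF assms(1,2) s(2,3)] by (simp_all only: x'_def y'_def)
  ultimately show "\<exists>x y. 1 \<le> x \<and> 1 \<le> y \<and> n = b * lucas_u a b k * x + lucas_u a b (Suc k) * y"
    unfolding wseq_Suc_eq_lucas_u by metis
next
  assume "\<exists>x y. 1 \<le> x \<and> 1 \<le> y \<and> n = b * lucas_u a b k * x + lucas_u a b (Suc k) * y"
  then obtain x y where xy: "1 \<le> x" "1 \<le> y" "n = b * lucas_u a b k * x + lucas_u a b (Suc k) * y"
    by blast
  then have "k + 2 \<le> k + 2 \<and> 1 \<le> k + 2 \<and> 1 \<le> x \<and> 1 \<le> y \<and> walk a b x y (k + 2) = n"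
    by (simp add: walk_def wseq_Suc_eq_lucas_u)
  then show "k + 2 \<le> s_max a b n"
    unfolding le_s_max_iff[OF assms] by blast
qed

lemma gamma_ge: "real a \<le> gamma a b"
proof -
  have "real a \<le> sqrt (real a ^ 2 + 4 * real b)"
    by (rule real_le_rsqrt) simp
  then show ?thesis by (simp add: gamma_def)
qed

lemma gamma_squared: "gamma a b ^ 2 = real a * gamma a b + real b"
  by (simp add: gamma_def power2_eq_square field_simps)

lemma gamma_gt_1:
  assumes "1 \<le> a" "1 \<le> b"
  shows "1 < gamma a b"
proof -
  have ge1: "1 \<le> gamma a b" using gamma_ge[of a b] assms(1) by linarith
  then have "gamma a b \<le> real a * gamma a b"
    using assms(1) mult_right_mono[of 1 "real a" "gamma a b"] by simp
  then have "gamma a b + 1 \<le> gamma a b ^ 2"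
    using assms(2) gamma_squared[of a b] by simp
  then have "gamma a b \<noteq> 1" by auto
  then show ?thesis using ge1 by simp
qed

lemma finite_gamma_le: "finite {(a, b). gamma a b \<le> M}"
proof (rule finite_subset)
  show "{(a, b). gamma a b \<le> M} \<subseteq> {..nat \<lceil>M\<rceil>} \<times> {..nat \<lceil>M ^ 2\<rceil>}"
  proof
    fix q assume "q \<in> {(a, b). gamma a b \<le> M}"
    then obtain a b where q: "q = (a, b)" and le: "gamma a b \<le> M" by blast
    have "0 \<le> gamma a b" using gamma_ge[of a b] by linarith
    then have "gamma a b ^ 2 \<le> M ^ 2" "0 \<le> real a * gamma a b"
      using power_mono[OF le] by simp_all
    then have "real b \<le> M ^ 2"
      using gamma_squared[of a b] by linarith
    moreover have "real a \<le> M"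
      using gamma_ge[of a b] le by linarith
    ultimately show "q \<in> {..nat \<lceil>M\<rceil>} \<times> {..nat \<lceil>M ^ 2\<rceil>}"
      unfolding q by (simp add: le_nat_iff le_ceiling_iff)
  qed
qed simp

lemma lucas_u_le_gamma_pow:
  assumes "1 \<le> a" "1 \<le> b"
  shows "real (lucas_u a b k) \<le> gamma a b ^ k"
proof (induction k rule: induct_nat_012)
  case (ge2 k)
  let ?g = "gamma a b"
  have "real (lucas_u a b (Suc (Suc k))) = a * real (lucas_u a b (Suc k)) + b * real (lucas_u a b k)"
    by simp
  also have "\<dots> \<le> a * ?g ^ Suc k + b * ?g ^ k"
    using ge2 by (intro add_mono mult_left_mono) auto
  also have "\<dots> = ?g ^ k * ?g ^ 2"
    by (simp add: gamma_squared algebra_simps)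
  finally show ?case by (simp add: power_add[symmetric])
qed (use gamma_gt_1[OF assms] in simp_all)

lemma gamma_pow_le_lucas_u:
  assumes "1 \<le> a" "1 \<le> b"
  shows "gamma a b ^ k \<le> gamma a b * real (lucas_u a b (Suc k))"
proof (induction k rule: induct_nat_012)
  case 0
  then show ?case using gamma_gt_1[OF assms] by simp
next
  case 1
  then show ?case using gamma_ge[of a b] assms(1) by simp
next
  case (ge2 k)
  let ?g = "gamma a b"
  have "?g ^ Suc (Suc k) = ?g ^ k * ?g ^ 2"
    by (simp add: power2_eq_square)
  also have "\<dots> = a * ?g ^ Suc k + b * ?g ^ k"
    by (simp add: gamma_squared algebra_simps)
  also have "\<dots> \<le> a * (?g * lucas_u a b (Suc (Suc k))) + b * (?g * lucas_u a b (Suc k))"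
    using ge2 by (intro add_mono mult_left_mono) auto
  also have "\<dots> = ?g * real (lucas_u a b (Suc (Suc (Suc k))))"
    by (simp add: algebra_simps)
  finally show ?case .
qed

lemma lucas_u_prod_le_gamma_pow:
  assumes "1 \<le> a" "1 \<le> b"
  shows "real (b * lucas_u a b k * lucas_u a b (Suc k)) \<le> b * gamma a b ^ (2 * k + 1)"
proof -
  have "real (lucas_u a b k) * real (lucas_u a b (Suc k)) \<le> gamma a b ^ k * gamma a b ^ Suc k"
    using lucas_u_le_gamma_pow[OF assms, of k] lucas_u_le_gamma_pow[OF assms, of "Suc k"]
      gamma_gt_1[OF assms] by (intro mult_mono) auto
  also have "\<dots> = gamma a b ^ (2 * k + 1)"
    by (simp add: mult_2 flip: power_add)
  finally show ?thesis
    by (simp add: mult.assoc mult_left_mono)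
qed

lemma gamma_pow_le_lucas_u_prod:
  assumes "1 \<le> a" "1 \<le> b" "1 \<le> k"
  shows "gamma a b ^ (2 * k) \<le> gamma a b ^ 3 * real (b * lucas_u a b k * lucas_u a b (Suc k))"
proof -
  let ?g = "gamma a b" and ?u = "\<lambda>i. real (lucas_u a b i)"
  obtain j where k: "k = Suc j" using assms(3) by (cases k) auto
  have g0: "0 < ?g" using gamma_gt_1[OF assms(1,2)] by simp
  have "?g ^ (2 * k) = ?g * (?g ^ j * ?g ^ k)"
    unfolding k by (simp add: mult_2 flip: power_add)
  also have "?g ^ j * ?g ^ k \<le> (?g * ?u k) * (?g * ?u (Suc k))"
    using gamma_pow_le_lucas_u[OF assms(1,2), of j] gamma_pow_le_lucas_u[OF assms(1,2), of k] g0 k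
    by (intro mult_mono) auto
  also have "\<dots> \<le> (?g * ?u k) * (?g * ?u (Suc k)) * b"
    using assms(2) g0 mult_left_mono[of 1 "real b" "(?g * ?u k) * (?g * ?u (Suc k))"] by simp
  finally have "?g ^ (2 * k) \<le> ?g * ((?g * ?u k) * (?g * ?u (Suc k)) * b)"
    using g0 by simp
  also have "\<dots> = ?g ^ 3 * real (b * lucas_u a b k * lucas_u a b (Suc k))"
    by (simp add: power3_eq_cube algebra_simps)
  finally show ?thesis .
qed

lemma le_s_max_if_gt:
  assumes "1 \<le> a" "1 \<le> b" "coprime a b" "1 \<le> k" "b * gamma a b ^ (2 * k + 1) < real n"
  shows "k + 2 \<le> s_max a b n"
proof -
  have "1 \<le> lucas_u a b k"
    using lucas_u_Suc_pos[OF assms(1), of b "k - 1"] assms(4) by simp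
  then have A: "1 \<le> b * lucas_u a b k" using assms(2) by simp
  have "b * lucas_u a b k * lucas_u a b (Suc k) < n"
    using lucas_u_prod_le_gamma_pow[OF assms(1,2), of k] assms(5) by linarith
  then obtain x y where xy: "1 \<le> x" "1 \<le> y" "n = b * lucas_u a b k * x + lucas_u a b (Suc k) * y"
    using ex_pos_combination_if_coprime[OF coprime_lucas_u[OF assms(3)] A lucas_u_Suc_pos[OF assms(1)]]
    by blast
  then have "1 \<le> n" using A by (simp add: trans_le_add1)
  then show ?thesis using xy le_s_max_iff_lucas_u[OF assms(1,2) \<open>1 \<le> n\<close>, of k] by blast
qed

lemma gamma_pow_le_if_le_s_max:
  assumes "1 \<le> a" "1 \<le> b" "1 \<le> n" "k + 2 \<le> s_max a b n"
  shows "gamma a b ^ k \<le> gamma a b * real n"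
proof -
  obtain x y where "1 \<le> y" "n = b * lucas_u a b k * x + lucas_u a b (Suc k) * y"
    using assms(4) le_s_max_iff_lucas_u[OF assms(1-3), of k] by blast
  then have "lucas_u a b (Suc k) \<le> n"
    by (metis le_add2 le_trans mult_le_mono2 mult.right_neutral)
  then have "gamma a b * real (lucas_u a b (Suc k)) \<le> gamma a b * real n"
    using gamma_gt_1[OF assms(1,2)] by simp
  then show ?thesis
    using gamma_pow_le_lucas_u[OF assms(1,2), of k] by linarith
qed

lemma card_le_s_max_le:
  assumes "1 \<le> a" "1 \<le> b" "1 \<le> k"
  shows "real (card {n \<in> {1..N}. k + 2 \<le> s_max a b n}) * gamma a b ^ (2 * k)
    \<le> real N ^ 2 * gamma a b ^ 3"
proof -
  let ?g = "gamma a b" and ?A = "b * lucas_u a b k" and ?B = "lucas_u a b (Suc k)"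
  let ?S = "{n \<in> {1..N}. \<exists>x y. 1 \<le> x \<and> 1 \<le> y \<and> n = ?A * x + ?B * y}"
  have "k + 2 \<le> s_max a b n \<longleftrightarrow> (\<exists>x y. 1 \<le> x \<and> 1 \<le> y \<and> n = ?A * x + ?B * y)"
    if "n \<in> {1..N}" for n
    using le_s_max_iff_lucas_u[OF assms(1,2), of n k] that by simp
  then have S: "{n \<in> {1..N}. k + 2 \<le> s_max a b n} = ?S"
    by blast
  have "real (card ?S * (?A * ?B)) \<le> real (N ^ 2)"
    using card_pos_combinations_le[where A = ?A and B = ?B and N = N] by linarith
  then have "real (card ?S) * real (?A * ?B) * ?g ^ 3 \<le> real N ^ 2 * ?g ^ 3"
    using gamma_gt_1[OF assms(1,2)] by (intro mult_right_mono) simp_all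
  moreover have "real (card ?S) * ?g ^ (2 * k) \<le> real (card ?S) * (?g ^ 3 * real (?A * ?B))"
    using gamma_pow_le_lucas_u_prod[OF assms] by (intro mult_left_mono) (simp_all add: mult.assoc)
  ultimately show ?thesis
    unfolding S by (simp add: algebra_simps)
qed

lemma eventually_s_max_lt:
  fixes g c :: real
  assumes "1 < g"
  shows "\<forall>\<^sub>F k in sequentially. \<forall>a b n. 1 \<le> a \<longrightarrow> 1 \<le> b \<longrightarrow> 1 \<le> n \<longrightarrow>
    g ^ 3 \<le> gamma a b \<longrightarrow> real n < c * g ^ (2 * k) \<longrightarrow> s_max a b n < k + 2"
  using eventually_le_pow[OF assms, of "c * g ^ 3"] eventually_ge_at_top[of 1]
proof eventually_elim
  case (elim k)
  then obtain m where k: "k = Suc m" by (cases k) auto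
  show ?case
  proof (intro allI impI)
    fix a b n
    assume ab: "1 \<le> a" "1 \<le> b" and n: "1 \<le> n" "real n < c * g ^ (2 * k)"
      and large: "g ^ 3 \<le> gamma a b"
    show "s_max a b n < k + 2"
    proof (rule ccontr)
      assume "\<not> s_max a b n < k + 2"
      then have "gamma a b ^ Suc m \<le> gamma a b * real n"
        using gamma_pow_le_if_le_s_max[OF ab n(1), of "Suc m"] k by simp
      then have "gamma a b ^ m \<le> real n"
        using gamma_gt_1[OF ab] by (simp add: mult_le_cancel_left_pos)
      moreover have "(g ^ 3) ^ m \<le> gamma a b ^ m"
        using large assms by (intro power_mono) auto
      ultimately have "g ^ (3 * m) < c * g ^ (2 * m + 2)"
        using n(2) k by (simp add: power_mult)
      then have "g ^ m * g ^ (2 * m) < (c * g ^ 2) * g ^ (2 * m)"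
        by (simp add: power_add[symmetric] mult.assoc mult.commute mult.left_commute)
      then have "g ^ m < c * g ^ 2"
        using assms by simp
      moreover have "c * g ^ 3 \<le> g * g ^ m"
        using elim(1) k by simp
      ultimately show False
        using assms by (simp add: power3_eq_cube power2_eq_square mult.assoc)
    qed
  qed
qed

lemma eventually_card_le_s_max_le:
  fixes g c e :: real
  assumes "1 \<le> a" "1 \<le> b" "0 < g" "g < gamma a b" "0 < e"
  shows "\<forall>\<^sub>F k in sequentially. \<forall>N. real N < c * g ^ (2 * k) \<longrightarrow>
    real (card {n \<in> {1..N}. k + 2 \<le> s_max a b n}) \<le> e * real N"
proof -
  let ?G = "gamma a b"
  have G0: "0 < ?G" using gamma_gt_1[OF assms(1,2)] by simp
  have "\<bar>(g / ?G) ^ 2\<bar> < 1"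
    using assms(3,4) G0 by (simp add: power_less_one_iff divide_less_eq)
  then have "(\<lambda>k. c * ?G ^ 3 * ((g / ?G) ^ 2) ^ k) \<longlonglongrightarrow> 0"
    by (intro tendsto_mult_right_zero LIMSEQ_power_zero) simp
  then have "\<forall>\<^sub>F k in sequentially. c * ?G ^ 3 * ((g / ?G) ^ 2) ^ k < e"
    using assms(5) by (rule order_tendstoD(2))
  then show ?thesis
    using eventually_ge_at_top[of 1]
  proof eventually_elim
    case (elim k)
    show ?case
    proof (intro allI impI)
      fix N assume N: "real N < c * g ^ (2 * k)"
      let ?card = "real (card {n \<in> {1..N}. k + 2 \<le> s_max a b n})"
      have "?card * ?G ^ (2 * k) \<le> real N ^ 2 * ?G ^ 3"
        using card_le_s_max_le[OF assms(1,2) elim(2)] .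
      then have "?card \<le> real N * (real N * ?G ^ 3 / ?G ^ (2 * k))"
        using G0 by (simp add: pos_le_divide_eq power2_eq_square)
      also have "\<dots> \<le> real N * (c * g ^ (2 * k) * ?G ^ 3 / ?G ^ (2 * k))"
        using N G0 by (intro mult_left_mono divide_right_mono mult_right_mono) auto
      also have "c * g ^ (2 * k) * ?G ^ 3 / ?G ^ (2 * k) = c * ?G ^ 3 * ((g / ?G) ^ 2) ^ k"
        by (simp add: power_mult power_divide)
      also have "real N * \<dots> \<le> real N * e"
        using elim(1) by (intro mult_left_mono) auto
      finally show "?card \<le> e * real N"
        by (simp add: mult.commute)
    qed
  qed
qed

lemma s_max_le:
  assumes "1 \<le> a" "1 \<le> b" "1 \<le> n"
  shows "s_max a b n \<le> n + 1"
proof -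
  obtain s x y where s: "s_max a b n \<le> s" "1 \<le> x" "1 \<le> y" "walk a b x y s = n"
    using le_s_max_iff[OF assms, of "s_max a b n"] by blast
  then show ?thesis
    using walk_index_le[OF assms(1,2) s(2-4)] by linarith
qed

lemma Gamma_le_gamma:
  assumes "(a, b) \<in> T"
  shows "Gamma T \<le> gamma a b"
  unfolding Gamma_def
proof (rule cInf_lower)
  show "gamma a b \<in> (\<lambda>(a, b). gamma a b) ` T"
    by (rule image_eqI[of _ _ "(a, b)"]) (simp_all add: assms)
  show "bdd_below ((\<lambda>(a, b). gamma a b) ` T)"
  proof (rule bdd_belowI)
    fix g assume "g \<in> (\<lambda>(a, b). gamma a b) ` T"
    then obtain a b where "g = gamma a b" by auto
    then show "0 \<le> g" using gamma_ge[of a b] by simp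
  qed
qed

lemma exists_rival_if_not_in_Eset:
  assumes "valid T" "(\<alpha>', \<beta>') \<in> T" "1 \<le> n" "n \<notin> Eset T {(\<alpha>', \<beta>')}"
  shows "\<exists>a b. (a, b) \<in> T \<and> (a, b) \<noteq> (\<alpha>', \<beta>') \<and> s_max \<alpha>' \<beta>' n \<le> s_max a b n"
proof (rule ccontr)
  assume no_rival: "\<not> ?thesis"
  then have less: "s_max a b n < s_max \<alpha>' \<beta>' n"
    if "(a, b) \<in> T" "(a, b) \<noteq> (\<alpha>', \<beta>')" for a b
    using that by (meson not_le)
  let ?I = "(\<lambda>(a, b). s_max a b n) ` T"
  have "?I \<subseteq> {..n + 1}"
  proof
    fix i assume "i \<in> ?I"
    then obtain a b where ab: "(a, b) \<in> T" "i = s_max a b n" by auto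
    then have "1 \<le> a" "1 \<le> b" using assms(1) by (auto simp: valid_def)
    then show "i \<in> {..n + 1}"
      using ab(2) assms(3) s_max_le[of a b n] by simp
  qed
  then have "finite ?I" by (rule finite_subset) simp
  moreover have "s_max \<alpha>' \<beta>' n \<in> ?I"
    by (rule image_eqI[of _ _ "(\<alpha>', \<beta>')"]) (simp_all add: assms(2))
  moreover have "i \<le> s_max \<alpha>' \<beta>' n" if i: "i \<in> ?I" for i
  proof -
    obtain a b where "(a, b) \<in> T" "i = s_max a b n" using i by auto
    then show ?thesis using less[of a b] by (cases "(a, b) = (\<alpha>', \<beta>')") auto
  qed
  ultimately have sbar: "sbar T n = s_max \<alpha>' \<beta>' n"
    unfolding sbar_def by (intro Max_eqI) auto
  have "Sset T n = {(\<alpha>', \<beta>')}"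
  proof (intro equalityI subsetI)
    fix q assume "q \<in> Sset T n"
    then obtain a b where "q = (a, b)" "(a, b) \<in> T" "s_max a b n = sbar T n"
      by (auto simp: Sset_def)
    then show "q \<in> {(\<alpha>', \<beta>')}"
      using less[of a b] sbar by auto
  qed (use assms(2) sbar in \<open>simp add: Sset_def\<close>)
  then show False
    using assms(3,4) by (simp add: Eset_def)
qed

lemma not_in_Eset_subset:
  assumes "valid T" "(\<alpha>', \<beta>') \<in> T" "1 \<le> k"
  shows "{1..N} - Eset T {(\<alpha>', \<beta>')}
    \<subseteq> {n \<in> {1..N}. real n \<le> \<beta>' * gamma \<alpha>' \<beta>' ^ (2 * k + 1)}
      \<union> (\<Union>(a, b) \<in> T - {(\<alpha>', \<beta>')}. {n \<in> {1..N}. k + 2 \<le> s_max a b n})"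
proof
  fix n assume n: "n \<in> {1..N} - Eset T {(\<alpha>', \<beta>')}"
  show "n \<in> {n \<in> {1..N}. real n \<le> \<beta>' * gamma \<alpha>' \<beta>' ^ (2 * k + 1)}
      \<union> (\<Union>(a, b) \<in> T - {(\<alpha>', \<beta>')}. {n \<in> {1..N}. k + 2 \<le> s_max a b n})"
  proof (cases "real n \<le> \<beta>' * gamma \<alpha>' \<beta>' ^ (2 * k + 1)")
    case False
    have p: "1 \<le> \<alpha>'" "1 \<le> \<beta>'" "coprime \<alpha>' \<beta>'"
      using assms(1,2) by (auto simp: valid_def)
    have "1 \<le> n" "n \<notin> Eset T {(\<alpha>', \<beta>')}" "n \<le> N" using n by auto
    then obtain a b where "(a, b) \<in> T" "(a, b) \<noteq> (\<alpha>', \<beta>')" "s_max \<alpha>' \<beta>' n \<le> s_max a b n"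
      using exists_rival_if_not_in_Eset[OF assms(1,2)] by blast
    moreover have "k + 2 \<le> s_max \<alpha>' \<beta>' n"
      using le_s_max_if_gt[OF p assms(3)] False by simp
    ultimately have "n \<in> (\<Union>(a, b) \<in> T - {(\<alpha>', \<beta>')}. {n \<in> {1..N}. k + 2 \<le> s_max a b n})"
      using \<open>1 \<le> n\<close> \<open>n \<le> N\<close> by (intro UN_I[of "(a, b)"]) auto
    then show ?thesis by blast
  qed (use n in auto)
qed

lemma card_not_in_Eset_le:
  assumes "valid T" "(\<alpha>', \<beta>') \<in> T" "1 \<le> k" "finite F"
    and "\<And>a b n. (a, b) \<in> T - {(\<alpha>', \<beta>')} - F \<Longrightarrow> n \<in> {1..N} \<Longrightarrow> s_max a b n < k + 2"
  shows "card ({1..N} - Eset T {(\<alpha>', \<beta>')})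
    \<le> card {n \<in> {1..N}. real n \<le> \<beta>' * gamma \<alpha>' \<beta>' ^ (2 * k + 1)}
      + (\<Sum>(a, b) \<in> F. card {n \<in> {1..N}. k + 2 \<le> s_max a b n})"
proof -
  let ?small = "{n \<in> {1..N}. real n \<le> \<beta>' * gamma \<alpha>' \<beta>' ^ (2 * k + 1)}"
  let ?D = "\<lambda>(a, b). {n \<in> {1..N}. k + 2 \<le> s_max a b n}"
  have "{1..N} - Eset T {(\<alpha>', \<beta>')} \<subseteq> ?small \<union> (\<Union>(a, b) \<in> T - {(\<alpha>', \<beta>')}. ?D (a, b))"
    using not_in_Eset_subset[OF assms(1-3)] by simp
  also have "\<dots> \<subseteq> ?small \<union> \<Union>(?D ` F)"
  proof (rule Un_mono[OF subset_refl], rule subsetI)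
    fix n assume "n \<in> (\<Union>(a, b) \<in> T - {(\<alpha>', \<beta>')}. ?D (a, b))"
    then obtain a b where ab: "(a, b) \<in> T - {(\<alpha>', \<beta>')}" "n \<in> ?D (a, b)" by blast
    have "(a, b) \<in> F"
    proof (rule ccontr)
      assume "(a, b) \<notin> F"
      then have "s_max a b n < k + 2" using assms(5) ab by simp
      with ab(2) show False by simp
    qed
    with ab show "n \<in> \<Union>(?D ` F)" by blast
  qed
  finally have "card ({1..N} - Eset T {(\<alpha>', \<beta>')}) \<le> card (?small \<union> \<Union>(?D ` F))"
    by (rule card_mono[rotated]) (use assms(4) in \<open>auto simp: case_prod_beta\<close>)
  also have "\<dots> \<le> card ?small + card (\<Union>(?D ` F))"
    by (rule card_Un_le)
  also have "card (\<Union>(?D ` F)) \<le> (\<Sum>q \<in> F. card (?D q))"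
    by (rule card_UN_le[OF assms(4)])
  finally show ?thesis
    by (simp add: case_prod_beta)
qed

lemma card_not_in_Eset_le_real:
  fixes x :: real
  assumes "valid T" "(\<alpha>', \<beta>') \<in> T" "1 \<le> k" "finite F"
    and "\<And>a b n. (a, b) \<in> T - {(\<alpha>', \<beta>')} - F \<Longrightarrow> n \<in> {1..N} \<Longrightarrow> s_max a b n < k + 2"
    and "\<And>a b. (a, b) \<in> F \<Longrightarrow> real (card {n \<in> {1..N}. k + 2 \<le> s_max a b n}) \<le> x"
  shows "real (card ({1..N} - Eset T {(\<alpha>', \<beta>')}))
    \<le> \<beta>' * gamma \<alpha>' \<beta>' ^ (2 * k + 1) + card F * x"
proof -
  have "real (card ({1..N} - Eset T {(\<alpha>', \<beta>')}))
      \<le> real (card {n \<in> {1..N}. real n \<le> \<beta>' * gamma \<alpha>' \<beta>' ^ (2 * k + 1)}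
        + (\<Sum>(a, b) \<in> F. card {n \<in> {1..N}. k + 2 \<le> s_max a b n}))"
    unfolding of_nat_le_iff by (rule card_not_in_Eset_le[OF assms(1-5)])
  also have "\<dots> = real (card {n \<in> {1..N}. real n \<le> \<beta>' * gamma \<alpha>' \<beta>' ^ (2 * k + 1)})
      + (\<Sum>(a, b) \<in> F. real (card {n \<in> {1..N}. k + 2 \<le> s_max a b n}))"
    by (simp add: of_nat_sum case_prod_beta)
  also have "\<dots> \<le> \<beta>' * gamma \<alpha>' \<beta>' ^ (2 * k + 1) + (\<Sum>(a, b) \<in> F. x)"
    using card_below_real_le gamma_ge[of \<alpha>' \<beta>'] assms(6)
    by (intro add_mono sum_mono) (auto simp: order_trans[OF of_nat_0_le_iff])
  finally show ?thesis
    by simp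
qed

lemma eventually_rivals_sparse:
  assumes valid: "valid T" and "1 < g" "0 < e"
    and unique_min: "\<forall>(a, b) \<in> T. (a, b) \<noteq> (\<alpha>', \<beta>') \<longrightarrow> g < gamma a b"
  shows "\<forall>\<^sub>F k in sequentially. \<forall>N. real N < c * g ^ (2 * k) \<longrightarrow>
    (\<forall>a b. (a, b) \<in> T - {(\<alpha>', \<beta>')} \<longrightarrow> gamma a b < g ^ 3 \<longrightarrow>
      real (card {n \<in> {1..N}. k + 2 \<le> s_max a b n}) \<le> e * real N) \<and>
    (\<forall>a b n. (a, b) \<in> T \<longrightarrow> g ^ 3 \<le> gamma a b \<longrightarrow> n \<in> {1..N} \<longrightarrow> s_max a b n < k + 2)"
proof -
  define F where "F = {(a, b) \<in> T - {(\<alpha>', \<beta>')}. gamma a b < g ^ 3}"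
  have ab1: "1 \<le> a" "1 \<le> b" if "(a, b) \<in> T" for a b
    using valid that by (auto simp: valid_def)
  have "finite F"
    using finite_gamma_le[of "g ^ 3"] by (rule finite_subset[rotated]) (auto simp: F_def)
  then have "\<forall>\<^sub>F k in sequentially. \<forall>(a, b) \<in> F. \<forall>N. real N < c * g ^ (2 * k) \<longrightarrow>
      real (card {n \<in> {1..N}. k + 2 \<le> s_max a b n}) \<le> e * real N"
  proof (rule eventually_ball_finite, clarify)
    fix a b assume "(a, b) \<in> F"
    then have "(a, b) \<in> T" "g < gamma a b"
      using unique_min by (auto simp: F_def)
    then show "\<forall>\<^sub>F k in sequentially. \<forall>N. real N < c * g ^ (2 * k) \<longrightarrow>
        real (card {n \<in> {1..N}. k + 2 \<le> s_max a b n}) \<le> e * real N"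
      using assms(2,3) by (intro eventually_card_le_s_max_le ab1) auto
  qed
  with eventually_s_max_lt[OF assms(2), of c] show ?thesis
  proof eventually_elim
    case (elim k)
    have "real (card {n \<in> {1..N}. k + 2 \<le> s_max a b n}) \<le> e * real N"
      if "(a, b) \<in> T - {(\<alpha>', \<beta>')}" "real N < c * g ^ (2 * k)" "gamma a b < g ^ 3" for a b N
      using elim(2) that by (auto simp: F_def)
    moreover have "s_max a b n < k + 2"
      if "(a, b) \<in> T" "real N < c * g ^ (2 * k)" "g ^ 3 \<le> gamma a b" "n \<in> {1..N}" for a b N n
      using elim(1) ab1[OF that(1)] that by auto
    ultimately show ?case by blast
  qed
qed

lemma eventually_card_not_in_Eset_le:
  assumes valid: "valid T" and p: "(\<alpha>', \<beta>') \<in> T"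
    and unique_min: "\<forall>(a, b) \<in> T. (a, b) \<noteq> (\<alpha>', \<beta>') \<longrightarrow> gamma \<alpha>' \<beta>' < gamma a b"
    and e: "0 < e"
  shows "\<forall>\<^sub>F N in sequentially. real (card ({1..N} - Eset T {(\<alpha>', \<beta>')})) \<le> 2 * e * real N"
proof -
  define g where "g = gamma \<alpha>' \<beta>'"
  define F where "F = {(a, b) \<in> T - {(\<alpha>', \<beta>')}. gamma a b < g ^ 3}"
  define c where "c = \<beta>' * g ^ 3 / e"
  define e' where "e' = e / (card F + 1)"
  have p1: "1 \<le> \<alpha>'" "1 \<le> \<beta>'" using valid p by (auto simp: valid_def)
  have g1: "1 < g" using gamma_gt_1[OF p1] by (simp add: g_def)
  have "finite F"
    using finite_gamma_le[of "g ^ 3"] by (rule finite_subset[rotated]) (auto simp: F_def)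
  have "1 < g ^ 2" "0 < \<beta>' * g / e" "0 < e'" using p1 g1 e by (simp_all add: e'_def)
  from eventually_pow_bracket[OF this(1,2) eventually_conj[OF eventually_ge_at_top[of 1]
      eventually_rivals_sparse[OF valid g1 this(3) unique_min[folded g_def], of c]]]
  show ?thesis
  proof eventually_elim
    case (elim N)
    then obtain k where k: "1 \<le> k" "\<beta>' * g / e * (g ^ 2) ^ k \<le> real N"
      "real N < \<beta>' * g / e * (g ^ 2) ^ Suc k"
      and rivals: "\<forall>N. real N < c * g ^ (2 * k) \<longrightarrow>
        (\<forall>a b. (a, b) \<in> T - {(\<alpha>', \<beta>')} \<longrightarrow> gamma a b < g ^ 3 \<longrightarrow>
          real (card {n \<in> {1..N}. k + 2 \<le> s_max a b n}) \<le> e' * real N) \<and>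
        (\<forall>a b n. (a, b) \<in> T \<longrightarrow> g ^ 3 \<le> gamma a b \<longrightarrow> n \<in> {1..N} \<longrightarrow> s_max a b n < k + 2)"
      by blast
    have "\<beta>' * g ^ (2 * k + 1) = e * (\<beta>' * g / e * (g ^ 2) ^ k)"
      using e by (simp add: power_add flip: power_mult)
    also have "\<dots> \<le> e * real N"
      using k(2) e by (intro mult_left_mono) simp_all
    finally have small: "\<beta>' * g ^ (2 * k + 1) \<le> e * real N" .
    have "\<beta>' * g / e * (g ^ 2) ^ Suc k = c * g ^ (2 * k)"
      by (simp add: c_def power_mult power3_eq_cube power2_eq_square)
    then have N: "real N < c * g ^ (2 * k)"
      using k(3) by simp
    have "real (card ({1..N} - Eset T {(\<alpha>', \<beta>')})) \<le> \<beta>' * g ^ (2 * k + 1) + card F * (e' * real N)"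
      unfolding g_def using rivals[rule_format, OF N]
      by (intro card_not_in_Eset_le_real[OF valid p k(1) \<open>finite F\<close>]) (auto simp: F_def g_def not_less)
    also have "card F * (e' * real N) \<le> e * real N"
      using e by (simp add: e'_def field_simps)
    finally show ?case
      using small by simp
  qed
qed

lemma not_in_Eset_density_zero:
  assumes "valid T" "(\<alpha>', \<beta>') \<in> T"
    and "\<forall>(a, b) \<in> T. (a, b) \<noteq> (\<alpha>', \<beta>') \<longrightarrow> gamma \<alpha>' \<beta>' < gamma a b"
  shows "(\<lambda>N. real (card ({1..N} - Eset T {(\<alpha>', \<beta>')})) / real N) \<longlonglongrightarrow> 0"
proof (rule tendsto_iff[THEN iffD2], intro allI impI)
  fix r :: real assume "0 < r"
  then have "\<forall>\<^sub>F N in sequentially. real (card ({1..N} - Eset T {(\<alpha>', \<beta>')})) \<le> 2 * (r / 3) * real N"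
    by (intro eventually_card_not_in_Eset_le assms) simp
  then show "\<forall>\<^sub>F N in sequentially. dist (real (card ({1..N} - Eset T {(\<alpha>', \<beta>')})) / real N) 0 < r"
    using eventually_ge_at_top[of 1]
  proof eventually_elim
    case (elim N)
    then have "real (card ({1..N} - Eset T {(\<alpha>', \<beta>')})) / real N \<le> 2 * (r / 3)"
      by (simp add: divide_le_eq)
    then have "real (card ({1..N} - Eset T {(\<alpha>', \<beta>')})) / real N < r"
      using \<open>0 < r\<close> by linarith
    then show ?case
      unfolding dist_real_def by simp
  qed
qed

theorem corollary5p3:
  fixes T :: "(nat \<times> nat) set" and \<alpha>' \<beta>' :: nat
  assumes "valid T"
    and "(\<alpha>', \<beta>') \<in> T"
    and "gamma \<alpha>' \<beta>' = Gamma T"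
    and "\<forall>(\<alpha>, \<beta>) \<in> T. gamma \<alpha> \<beta> = Gamma T \<longrightarrow> (\<alpha>, \<beta>) = (\<alpha>', \<beta>')"
  shows "(\<lambda>n. real (card (Eset T {(\<alpha>', \<beta>')} \<inter> {1..n})) / real n) \<longlonglongrightarrow> 1"
proof -
  let ?bad = "\<lambda>N. {1..N} - Eset T {(\<alpha>', \<beta>')}"
  have "\<forall>(a, b) \<in> T. (a, b) \<noteq> (\<alpha>', \<beta>') \<longrightarrow> gamma \<alpha>' \<beta>' < gamma a b"
    using assms(3,4) Gamma_le_gamma by fastforce
  then have "(\<lambda>N. 1 - real (card (?bad N)) / real N) \<longlonglongrightarrow> 1 - 0"
    by (intro tendsto_diff tendsto_const not_in_Eset_density_zero assms(1,2))
  moreover have "real (card (Eset T {(\<alpha>', \<beta>')} \<inter> {1..N})) / real N = 1 - real (card (?bad N)) / real N"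
    if "1 \<le> N" for N
  proof -
    have "card (Eset T {(\<alpha>', \<beta>')} \<inter> {1..N}) + card (?bad N) = N"
      using card_Int_Diff[of "{1..N}" "Eset T {(\<alpha>', \<beta>')}"] by (simp add: Int_commute)
    then show ?thesis
      using that by (simp add: field_simps flip: of_nat_add)
  qed
  then have "\<forall>\<^sub>F N in sequentially. 1 - real (card (?bad N)) / real N
      = real (card (Eset T {(\<alpha>', \<beta>')} \<inter> {1..N})) / real N"
    by (intro eventually_sequentiallyI[of 1]) simp
  ultimately show ?thesis
    by (simp add: Lim_transform_eventually)
qed

end
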